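(* Let $I\subseteq\mathbb{R}_+\setminus\{0\}$ be a nonempty, non-singleton interval and let $n\in\mathbb{N}$ with $n\geq 2$. Suppose $\Phi: I\to\mathbb{R}$ satisfies $$\Phi(x)+\frac{(x+y)^n-x^n}{y^n}\Phi(y)=\Phi(y)+\frac{(x+y)^n-y^n}{x^n}\Phi(x)\qquad\text{for all } x,y\in I.$$ Then there exists $c\in\mathbb{R}$ such that $\Phi(x)=cx^n$ for all $x\in I$.
   Context: $\mathbb{R}_+$ denotes the set of nonnegative real numbers. *)

theory Defs
  imports "HOL-Analysis.Analysis"
begin

end

theory Submission
  imports Defs
begin

text \<open>Dividing the equation by \<open>x\<^sup>n y\<^sup>n\<close> and writing \<open>\<psi> x = \<Phi> x / x\<^sup>n\<close>, it becomes
  \<open>(\<psi> x - \<psi> y) (x\<^sup>n + y\<^sup>n - (x + y)\<^sup>n) = 0\<close>. For \<open>n \<ge> 2\<close> the power is strictly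
  superadditive on positive numbers, so \<open>\<psi>\<close> is constant.\<close>

lemma sum_powers_less_power_add:
  fixes x y :: "'a :: linordered_idom"
  assumes "x > 0" "y > 0" "n \<ge> 2"
  shows "x ^ n + y ^ n < (x + y) ^ n"
  using assms(3)
proof (induction n rule: dec_induct)
  case base
  then show ?case using assms by (simp add: power2_eq_square algebra_simps)
next
  case (step m)
  have "x ^ Suc m + y ^ Suc m \<le> (x + y) * (x ^ m + y ^ m)"
    using assms by (simp add: algebra_simps)
  also have "\<dots> < (x + y) * (x + y) ^ m"
    using step.IH assms by simp
  finally show ?case by simp
qed

lemma power_ratio_eq_if_functional_equation:
  fixes x y :: real and \<Phi> :: "real \<Rightarrow> real"
  assumes x: "x > 0" and y: "y > 0" and n: "n \<ge> 2"
    and eq: "\<Phi> x + ((x + y) ^ n - x ^ n) / y ^ n * \<Phi> y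
               = \<Phi> y + ((x + y) ^ n - y ^ n) / x ^ n * \<Phi> x"
  shows "\<Phi> x / x ^ n = \<Phi> y / y ^ n"
proof -
  define p where "p = \<Phi> x / x ^ n"
  define q where "q = \<Phi> y / y ^ n"
  have "\<Phi> x = p * x ^ n" "\<Phi> y = q * y ^ n"
    using x y by (simp_all add: p_def q_def)
  with eq x y have "p * x ^ n + ((x + y) ^ n - x ^ n) * q = q * y ^ n + ((x + y) ^ n - y ^ n) * p"
    by simp
  then have "(p - q) * (x ^ n + y ^ n - (x + y) ^ n) = 0"
    by (simp add: algebra_simps)
  moreover have "x ^ n + y ^ n - (x + y) ^ n \<noteq> 0"
    using sum_powers_less_power_add[OF x y n] by simp
  ultimately show ?thesis
    by (simp add: p_def q_def)
qed

theorem proposition2p6: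
  fixes I :: "real set" and n :: nat and \<Phi> :: "real \<Rightarrow> real"
  assumes "is_interval I"
    and "I \<subseteq> {0<..}"
    and "\<exists>a\<in>I. \<exists>b\<in>I. a \<noteq> b"
    and "n \<ge> 2"
    and "\<And>x y. x \<in> I \<Longrightarrow> y \<in> I \<Longrightarrow>
           \<Phi> x + ((x + y) ^ n - x ^ n) / y ^ n * \<Phi> y
             = \<Phi> y + ((x + y) ^ n - y ^ n) / x ^ n * \<Phi> x"
  shows "\<exists>c::real. \<forall>x\<in>I. \<Phi> x = c * x ^ n"
proof -
  from assms(3) obtain a where a: "a \<in> I" by blast
  have "\<Phi> x = \<Phi> a / a ^ n * x ^ n" if x: "x \<in> I" for x
  proof -
    have "x > 0" "a > 0" using x a assms(2) by auto
    then have "\<Phi> x / x ^ n = \<Phi> a / a ^ n"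
      using power_ratio_eq_if_functional_equation assms(4,5) x a by blast
    with \<open>x > 0\<close> show ?thesis by (simp add: field_simps)
  qed
  then show ?thesis by blast
qed

end
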